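(* Let $G$ be a non-cyclic finite group of order $n$. Then $$\psi(G)\leq \frac{7}{11}\,\psi(C_n).$$
   Context: For a finite group $G$, $\psi(G)=\sum_{g\in G} o(g)$ denotes the sum of the orders of all elements of $G$. $C_n$ denotes the cyclic group of order $n$. *)

theory Defs
  imports "HOL-Algebra.Algebra"
begin

definition psi :: "('a, 'b) monoid_scheme \<Rightarrow> nat" where
  "psi G = (\<Sum>g\<in>carrier G. group.ord G g)"

end

theory Submission
  imports Defs "HOL-Number_Theory.Number_Theory"
begin

text \<open>The element orders of \<open>C\<^sub>n\<close> sum to \<open>cyclic_psi n\<close>, a multiplicative function with
  \<open>(p + 1) * cyclic_psi (p ^ e) = p ^ (2 * e + 1) + 1\<close>. The bound is proved by induction on
  \<open>|G|\<close>. Let \<open>x\<close> have maximal order \<open>M\<close>, let \<open>m = |G| / M \<ge> 2\<close> and let \<open>q\<close> be the largest prime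
  divisor of \<open>|G|\<close>. For a \<open>2\<close>-group the estimate \<open>\<psi>(G) \<le> \<psi>(\<langle>x\<rangle>) + (|G| - M) M\<close> suffices, and
  for \<open>q \<le> m\<close> so does \<open>\<psi>(G) \<le> |G| M\<close>, because \<open>2 n\<^sup>2 \<le> (q + 1) \<psi>(C\<^sub>n)\<close>. If \<open>m < q\<close>,
  every \<open>q\<close>-element lies in \<open>\<langle>x\<rangle>\<close>, so the Sylow \<open>q\<close>-subgroup \<open>P\<close> is cyclic and normal. Every
  coset of \<open>P\<close> contains an element whose order equals the order of the coset in \<open>G/P\<close>, whence
  \<open>\<psi>(G) \<le> \<psi>(P) \<psi>(G/P)\<close>, and induction settles a non-cyclic \<open>G/P\<close>. If \<open>G/P\<close> is cyclic, its
  generator does not centralize \<open>P\<close>, as \<open>G\<close> would be cyclic otherwise; so the cosets centralizing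
  \<open>P\<close> form a proper subgroup of \<open>G/P\<close>, and on every other coset the \<open>P\<close>-part of the element
  orders is at most \<open>|P| / q\<close>.\<close>

hide_const (open) Divisibility.prime

section \<open>The sum of element orders of a cyclic group\<close>

text \<open>The residue \<open>i\<close> has order \<open>n div gcd n i\<close> in \<open>\<int>/n\<int>\<close>, so this is \<open>\<psi>(C\<^sub>n)\<close>.\<close>
definition cyclic_psi :: "nat \<Rightarrow> nat" where
  "cyclic_psi n = (\<Sum>i<n. n div gcd n i)"

lemma cyclic_psi_1 [simp]: "cyclic_psi (Suc 0) = 1"
  by (simp add: cyclic_psi_def lessThan_Suc)

lemma cyclic_psi_le_square: "cyclic_psi n \<le> n * n"
proof -
  have "cyclic_psi n \<le> (\<Sum>i<n. n)"
    unfolding cyclic_psi_def by (rule sum_mono) simp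
  then show ?thesis by simp
qed

lemma gcd_mult_eq_if_coprime:
  fixes a b i :: nat
  assumes "coprime a b"
  shows "gcd (a * b) i = gcd a i * gcd b i"
proof (rule dvd_antisym)
  have "coprime (gcd a i) (gcd b i)"
    using assms by (rule coprime_imp_coprime) (meson dvd_trans gcd_dvd1)+
  then show "gcd a i * gcd b i dvd gcd (a * b) i"
    by (simp add: divides_mult mult_dvd_mono)
  let ?g = "gcd (a * b) i"
  have "?g dvd gcd (a * b) (i * b)" by (simp add: dvd_mult2)
  then have "?g dvd gcd a i * b" by (simp add: gcd_mult_right gcd.commute)
  moreover have "?g dvd gcd (a * i) (i * i)" by (simp add: dvd_mult2)
  then have "?g dvd gcd a i * i" by (simp add: gcd_mult_right gcd.commute)
  ultimately have "?g dvd gcd (gcd a i * b) (gcd a i * i)" by simp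
  then show "?g dvd gcd a i * gcd b i" by (simp add: gcd_mult_left)
qed

lemma bij_betw_mod_pair:
  fixes a b :: nat
  assumes "coprime a b" "a > 0" "b > 0"
  shows "bij_betw (\<lambda>i. (i mod a, i mod b)) {..<a * b} ({..<a} \<times> {..<b})"
proof -
  let ?h = "\<lambda>i::nat. (i mod a, i mod b)"
  have inj: "inj_on ?h {..<a * b}"
  proof (rule inj_onI)
    fix x y assume xy: "x \<in> {..<a * b}" "y \<in> {..<a * b}" "?h x = ?h y"
    then have "[x = y] (mod a)" "[x = y] (mod b)" by (auto simp: cong_def)
    then have "[x = y] (mod a * b)" using assms(1) by (rule coprime_cong_mult_nat)
    then show "x = y" using xy by (auto simp: cong_def)
  qed
  have "card (?h ` {..<a * b}) = card ({..<a} \<times> {..<b})"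
    using card_image[OF inj] by (simp add: card_cartesian_product)
  then have "?h ` {..<a * b} = {..<a} \<times> {..<b}"
    using assms by (intro card_subset_eq) auto
  then show ?thesis using inj by (simp add: bij_betw_def)
qed

lemma cyclic_psi_mult:
  assumes "coprime a b"
  shows "cyclic_psi (a * b) = cyclic_psi a * cyclic_psi b"
proof (cases "a = 0 \<or> b = 0")
  case True
  then show ?thesis by (auto simp: cyclic_psi_def)
next
  case False
  then have a: "a > 0" and b: "b > 0" by auto
  let ?g = "\<lambda>(x, y). (a div gcd a x) * (b div gcd b y)"
  have term_eq: "(a * b) div gcd (a * b) i = ?g (i mod a, i mod b)" for i
  proof -
    have "gcd a i = gcd a (i mod a)" "gcd b i = gcd b (i mod b)"
      by (metis gcd.commute gcd_red_nat)+
    then show ?thesis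
      by (simp add: gcd_mult_eq_if_coprime[OF assms] div_mult_div_if_dvd)
  qed
  have "cyclic_psi (a * b) = (\<Sum>i<a * b. ?g (i mod a, i mod b))"
    unfolding cyclic_psi_def using term_eq by simp
  also have "\<dots> = sum ?g ({..<a} \<times> {..<b})"
    by (rule sum.reindex_bij_betw[OF bij_betw_mod_pair[OF assms a b]])
  also have "\<dots> = cyclic_psi a * cyclic_psi b"
    by (simp add: sum.cartesian_product[symmetric] cyclic_psi_def sum_product)
  finally show ?thesis .
qed

lemma cyclic_psi_prime_power_Suc:
  assumes "prime p"
  shows "cyclic_psi (p ^ Suc e) = cyclic_psi (p ^ e) + (p ^ Suc e - p ^ e) * p ^ Suc e"
proof -
  let ?N = "p ^ Suc e"
  let ?f = "\<lambda>i. ?N div gcd ?N i"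
  define A where "A = (\<lambda>j. p * j) ` {..<p ^ e}"
  have p0: "p > 0" using assms prime_gt_0_nat by blast
  have inj: "inj_on (\<lambda>j. p * j) {..<p ^ e}" using p0 by (simp add: inj_on_def)
  have A_sub: "A \<subseteq> {..<?N}" using p0 by (auto simp: A_def)
  have "(\<Sum>i\<in>A. ?f i) = (\<Sum>j<p ^ e. ?f (p * j))"
    unfolding A_def by (rule sum.reindex[OF inj, unfolded comp_def])
  also have "\<dots> = cyclic_psi (p ^ e)"
    unfolding cyclic_psi_def using p0 by (intro sum.cong) (simp_all add: gcd_mult_distrib_nat[symmetric])
  finally have sum_A: "(\<Sum>i\<in>A. ?f i) = cyclic_psi (p ^ e)" .
  have "?f i = ?N" if "i \<in> {..<?N} - A" for i
  proof -
    have "\<not> p dvd i"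
    proof
      assume "p dvd i"
      then obtain j where "i = p * j" by blast
      with that p0 show False by (auto simp: A_def)
    qed
    then have "coprime ?N i" using assms by (simp add: prime_imp_coprime)
    then show ?thesis by simp
  qed
  then have "(\<Sum>i\<in>{..<?N} - A. ?f i) = card ({..<?N} - A) * ?N" by simp
  also have "card ({..<?N} - A) = ?N - p ^ e"
    using A_sub card_image[OF inj] by (simp add: card_Diff_subset finite_subset A_def)
  finally have sum_rest: "(\<Sum>i\<in>{..<?N} - A. ?f i) = (?N - p ^ e) * ?N" .
  show ?thesis
    unfolding cyclic_psi_def[of ?N] sum.subset_diff[OF A_sub finite_lessThan]
    using sum_A sum_rest by (simp add: cyclic_psi_def)
qed

lemma cyclic_psi_prime_power:
  assumes "prime p"
  shows "(p + 1) * cyclic_psi (p ^ e) = p ^ (2 * e + 1) + 1"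
proof (induction e)
  case 0
  then show ?case by (simp add: cyclic_psi_def)
next
  case (Suc e)
  obtain k where k: "p = Suc k" using assms prime_gt_0_nat not0_implies_Suc by blast
  define Y where "Y = p ^ (2 * e + 1)"
  have "p ^ Suc e - p ^ e = k * p ^ e" by (simp add: k)
  then have step: "cyclic_psi (p ^ Suc e) = cyclic_psi (p ^ e) + k * Y"
    unfolding cyclic_psi_prime_power_Suc[OF assms]
    by (simp add: Y_def power_add mult_2 power2_eq_square[symmetric] power_mult[symmetric] algebra_simps)
  have "(p + 1) * cyclic_psi (p ^ Suc e) = (p + 1) * cyclic_psi (p ^ e) + (p + 1) * k * Y"
    unfolding step by (simp add: algebra_simps)
  also have "\<dots> = Y + 1 + (p + 1) * k * Y"
    using Suc.IH by (simp add: Y_def)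
  also have "\<dots> = p * p * Y + 1"
    by (simp add: k algebra_simps)
  also have "p * p * Y = p ^ (2 * Suc e + 1)"
    by (simp add: Y_def)
  finally show ?case .
qed

lemma cyclic_psi_prime_power_Suc_ge:
  assumes "prime p"
  shows "(p * p - p + 1) * cyclic_psi (p ^ e) \<le> cyclic_psi (p ^ Suc e)"
proof -
  have "(p * p - p) * cyclic_psi (p ^ e) \<le> (p * p - p) * (p ^ e * p ^ e)"
    using cyclic_psi_le_square by (rule mult_left_mono) simp
  also have "\<dots> = (p ^ Suc e - p ^ e) * p ^ Suc e"
    by (simp add: diff_mult_distrib algebra_simps)
  finally have "(p * p - p) * cyclic_psi (p ^ e) \<le> (p ^ Suc e - p ^ e) * p ^ Suc e" .
  then show ?thesis
    unfolding cyclic_psi_prime_power_Suc[OF assms] add_mult_distrib by linarith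
qed

lemma cyclic_psi_mult_prime_ge:
  assumes p: "prime p" and "m > 0"
  shows "(p * p - p + 1) * cyclic_psi m \<le> cyclic_psi (p * m)"
proof -
  define e where "e = multiplicity p m"
  obtain r where r: "m = p ^ e * r" "\<not> p dvd r"
    using multiplicity_decompose'[of m p] assms prime_gt_1_nat[OF p] unfolding e_def by auto
  have "coprime p r" using r(2) p by (simp add: prime_imp_coprime)
  then have cop: "coprime (p ^ e) r" "coprime (p ^ Suc e) r" by simp_all
  have pm: "p * m = p ^ Suc e * r" using r(1) by simp
  have "(p * p - p + 1) * cyclic_psi (p ^ e) * cyclic_psi r \<le> cyclic_psi (p ^ Suc e) * cyclic_psi r"
    by (rule mult_right_mono[OF cyclic_psi_prime_power_Suc_ge[OF p]]) simp
  then show ?thesis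
    unfolding pm by (simp only: r(1) cyclic_psi_mult[OF cop(1)] cyclic_psi_mult[OF cop(2)] mult.assoc)
qed

lemma cyclic_psi_dvd_mono:
  assumes "m dvd n" "n > 0"
  shows "cyclic_psi m \<le> cyclic_psi n"
proof -
  obtain c where c: "n = m * c" using assms(1) by blast
  then have "c > 0" "m > 0" using assms(2) by auto
  then have inj: "inj_on (\<lambda>i. c * i) {..<m}" by (simp add: inj_on_def)
  have "gcd n (c * i) = c * gcd m i" for i
    unfolding c by (simp add: gcd_mult_distrib_nat mult.commute)
  then have "cyclic_psi m = (\<Sum>i<m. n div gcd n (c * i))"
    unfolding cyclic_psi_def by (intro sum.cong) (use \<open>c > 0\<close> in \<open>simp_all add: c\<close>)
  also have "\<dots> = (\<Sum>j\<in>(\<lambda>i. c * i) ` {..<m}. n div gcd n j)"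
    by (simp add: sum.reindex[OF inj])
  also have "\<dots> \<le> cyclic_psi n"
    unfolding cyclic_psi_def using \<open>c > 0\<close> by (intro sum_mono2) (auto simp: c)
  finally show ?thesis .
qed

lemma cyclic_psi_proper_divisor:
  assumes "k > 0" "d dvd k" "d \<noteq> 1"
  shows "3 * cyclic_psi (k div d) \<le> cyclic_psi k"
proof -
  obtain p where p: "prime p" "p dvd d" using prime_factor_nat assms(3) by blast
  obtain d' where d': "d = p * d'" using p(2) by blast
  obtain j where j: "k = d * j" using assms(2) by blast
  have "j > 0" "d' > 0" using j d' assms(1) by auto
  have "p \<ge> 2" using p(1) prime_ge_2_nat by blast
  then have "3 \<le> p * p - p + 1" using mult_le_mono1[of 2 p p] by linarith
  then have "3 * cyclic_psi (d' * j) \<le> (p * p - p + 1) * cyclic_psi (d' * j)"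
    by (rule mult_right_mono) simp
  also have "\<dots> \<le> cyclic_psi k"
    using cyclic_psi_mult_prime_ge[OF p(1)] \<open>j > 0\<close> \<open>d' > 0\<close> by (simp add: j d' mult.assoc)
  finally have "3 * cyclic_psi (d' * j) \<le> cyclic_psi k" .
  moreover have "cyclic_psi j \<le> cyclic_psi (d' * j)"
    using \<open>j > 0\<close> \<open>d' > 0\<close> by (intro cyclic_psi_dvd_mono) simp_all
  ultimately show ?thesis
    using j assms(1) by simp
qed

lemma ex_greatest_prime_factor:
  fixes n :: nat
  assumes "n > 1"
  obtains p where "prime p" "p dvd n" "\<And>q. q \<in> prime_factors n \<Longrightarrow> q \<le> p"
proof -
  obtain p' where "prime p'" "p' dvd n" using prime_factor_nat assms by (metis less_irrefl)
  then have "p' \<in> prime_factors n" using assms by (simp add: in_prime_factors_iff)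
  then have "Max (prime_factors n) \<in> prime_factors n" by (intro Max_in) auto
  then have "prime (Max (prime_factors n))" "Max (prime_factors n) dvd n" by auto
  moreover have "q \<le> Max (prime_factors n)" if "q \<in> prime_factors n" for q
    using that by (rule Max_ge[OF finite_set_mset])
  ultimately show ?thesis using that by blast
qed

lemma cyclic_psi_prime_power_mult_lower_bound:
  assumes p: "prime p" and "\<not> p dvd r" and r_bound: "2 * r\<^sup>2 \<le> p * cyclic_psi r"
  shows "2 * (p ^ e * r)\<^sup>2 \<le> (p + 1) * cyclic_psi (p ^ e * r)"
proof -
  have "coprime (p ^ e) r" using assms(2) p by (simp add: prime_imp_coprime)
  then have psi_n: "cyclic_psi (p ^ e * r) = cyclic_psi (p ^ e) * cyclic_psi r"
    by (rule cyclic_psi_mult)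
  have "2 * (p ^ e * r)\<^sup>2 = p ^ (2 * e) * (2 * r\<^sup>2)"
    by (simp add: power_mult_distrib power_mult algebra_simps)
  also have "\<dots> \<le> p ^ (2 * e) * (p * cyclic_psi r)"
    using r_bound by simp
  also have "\<dots> \<le> (p ^ (2 * e + 1) + 1) * cyclic_psi r"
    by (simp add: algebra_simps)
  also have "\<dots> = (p + 1) * cyclic_psi (p ^ e) * cyclic_psi r"
    unfolding cyclic_psi_prime_power[OF p] ..
  also have "\<dots> = (p + 1) * cyclic_psi (p ^ e * r)"
    unfolding psi_n by (simp add: algebra_simps)
  finally show ?thesis .
qed

lemma cyclic_psi_lower_bound:
  assumes "n > 0" "Q \<ge> 1" "\<And>p. p \<in> prime_factors n \<Longrightarrow> p \<le> Q"
  shows "2 * n\<^sup>2 \<le> (Q + 1) * cyclic_psi n"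
  using assms
proof (induction n arbitrary: Q rule: less_induct)
  case (less n)
  show ?case
  proof (cases "n = 1")
    case True
    then show ?thesis using less.prems by simp
  next
    case False
    obtain p where p: "prime p" "p dvd n" and p_max: "\<And>q. q \<in> prime_factors n \<Longrightarrow> q \<le> p"
      using ex_greatest_prime_factor less.prems(1) False by (metis less_one nat_neq_iff)
    have "p \<le> Q" using p less.prems by (simp add: in_prime_factors_iff)
    define e where "e = multiplicity p n"
    obtain r where r: "n = p ^ e * r" "\<not> p dvd r"
      using multiplicity_decompose'[of n p] less.prems(1) prime_gt_1_nat[OF p(1)] unfolding e_def by auto
    have "e \<noteq> 0" using r p(2) by (metis power_0 mult_1)
    have "p \<ge> 2" using p(1) prime_ge_2_nat by blast
    then have "p ^ e \<ge> 2" using \<open>e \<noteq> 0\<close> power_increasing[of 1 e p] by simp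
    then have "r < n" "r > 0" using r(1) less.prems(1) by (auto simp: nat_0_less_mult_iff)
    have "q \<le> p - 1" if "q \<in> prime_factors r" for q
    proof -
      have "q \<in> prime_factors n" using that r(1) \<open>r > 0\<close> less.prems(1)
        by (auto simp: in_prime_factors_iff)
      moreover have "q \<noteq> p" using that r(2) by auto
      ultimately show ?thesis using p_max by fastforce
    qed
    then have "2 * r\<^sup>2 \<le> p * cyclic_psi r"
      using less.IH[OF \<open>r < n\<close> \<open>r > 0\<close>, of "p - 1"] \<open>p \<ge> 2\<close> by simp
    then have "2 * n\<^sup>2 \<le> (p + 1) * cyclic_psi n"
      using cyclic_psi_prime_power_mult_lower_bound[OF p(1) r(2)] r(1) by simp
    also have "\<dots> \<le> (Q + 1) * cyclic_psi n"
      using \<open>p \<le> Q\<close> by simp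
    finally show ?thesis .
  qed
qed

lemma cyclic_psi_prime_power_ge:
  assumes q: "prime q" "q \<ge> 3" and "a \<ge> 1"
  shows "11 * (q ^ a * q ^ (a - 1)) \<le> 5 * cyclic_psi (q ^ a)"
proof -
  define V where "V = q ^ (a - 1)"
  have qa: "q ^ a = q * V" using \<open>a \<ge> 1\<close> by (simp add: V_def power_eq_if)
  have "q ^ (2 * a + 1) = q ^ a * q ^ a * q" by (simp add: mult_2 power_add)
  then have q2a: "q ^ (2 * a + 1) = q * q * (q * (V * V))" by (simp add: qa algebra_simps)
  have "11 * (q + 1) \<le> 5 * (3 * q)" using q(2) by simp
  also have "\<dots> \<le> 5 * (q * q)" using mult_le_mono1[OF q(2)] by simp
  finally have "11 * (q + 1) \<le> 5 * (q * q)" .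
  have "(q + 1) * (11 * (q ^ a * q ^ (a - 1))) = 11 * (q + 1) * (q * (V * V))"
    unfolding V_def[symmetric] qa by (simp add: algebra_simps)
  also have "\<dots> \<le> 5 * (q * q) * (q * (V * V))"
    using \<open>11 * (q + 1) \<le> 5 * (q * q)\<close> by (rule mult_right_mono) simp
  also have "\<dots> \<le> 5 * (q ^ (2 * a + 1) + 1)"
    unfolding q2a by simp
  also have "\<dots> = (q + 1) * (5 * cyclic_psi (q ^ a))"
    using cyclic_psi_prime_power[OF q(1), of a] by simp
  finally show ?thesis by (rule mult_left_le_imp_le) simp
qed

text \<open>The arithmetic of the case of a \<open>2\<close>-group whose largest element order is \<open>M\<close>.\<close>
lemma cyclic_psi_two_power_bound:
  assumes "M dvd 2 ^ e" "M \<ge> 2" "M < 2 ^ e"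
  shows "11 * (cyclic_psi M + (2 ^ e - M) * M) \<le> 7 * cyclic_psi (2 ^ e)"
proof -
  obtain b where b: "b \<le> e" "M = 2 ^ b"
    using assms(1) divides_primepow_nat[of 2] by auto
  have "b < e" using b assms(3) by (cases "b = e") auto
  have three_psi: "3 * cyclic_psi (2 ^ k) = 2 * 2 ^ k * 2 ^ k + 1" for k
  proof -
    have "(2::nat) ^ (2 * k + 1) = 2 * 2 ^ k * 2 ^ k" unfolding mult_2 power_add by simp
    then show ?thesis using cyclic_psi_prime_power[of 2 k] by simp
  qed
  obtain t where t: "2 ^ e = 2 * M + t"
    using \<open>b < e\<close> b(2) power_increasing[of "Suc b" e 2] by (metis Suc_leI le_Suc_ex one_le_numeral power_Suc)
  have "4 \<le> M * M" using mult_le_mono[OF assms(2) assms(2)] by simp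
  have "3 * (11 * (cyclic_psi M + (2 ^ e - M) * M)) = 11 * (2 * M * M + 1) + 33 * ((M + t) * M)"
    using three_psi[of b] by (simp add: t b(2)[symmetric] algebra_simps)
  also have "\<dots> \<le> 7 * (2 * (2 * M + t) * (2 * M + t) + 1)"
    using \<open>4 \<le> M * M\<close> by (simp add: algebra_simps)
  also have "\<dots> = 3 * (7 * cyclic_psi (2 ^ e))"
    using three_psi[of e] by (simp add: t algebra_simps)
  finally show ?thesis by simp
qed

text \<open>The arithmetic of the case \<open>q \<le> m\<close>: here \<open>s\<close> stands for \<open>\<psi>(G)\<close> and \<open>M\<close> for the largest
  element order, of index \<open>m\<close>.\<close>
lemma cyclic_psi_large_index_bound:
  fixes s :: nat
  assumes n: "n = M * m" and "M > 0" and q: "3 \<le> q" "q \<le> m"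
    and q_max: "\<And>p. p \<in> prime_factors n \<Longrightarrow> p \<le> q"
    and s_crude: "s \<le> cyclic_psi M + (n - M) * M" and s_coarse: "s \<le> n * M"
  shows "11 * s \<le> 7 * cyclic_psi n"
proof -
  have lower: "2 * n\<^sup>2 \<le> (q + 1) * cyclic_psi n"
    using assms by (intro cyclic_psi_lower_bound) auto
  show ?thesis
  proof (cases "q = 3 \<and> m = 3")
    case True
    then have n3: "n = 3 * M" using n by simp
    have "7 * cyclic_psi M \<le> cyclic_psi n"
      using cyclic_psi_mult_prime_ge[of 3 M] \<open>M > 0\<close> by (simp add: n3)
    have "63 * (11 * s) \<le> 99 * (7 * cyclic_psi M) + 77 * (2 * n\<^sup>2)"
      using s_crude by (simp add: n3 power2_eq_square algebra_simps)
    also have "\<dots> \<le> 99 * cyclic_psi n + 77 * (4 * cyclic_psi n)"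
      using \<open>7 * cyclic_psi M \<le> cyclic_psi n\<close> lower True by (intro add_mono) simp_all
    finally show ?thesis by simp
  next
    case False
    then have "11 * (q + 1) \<le> 14 * m" using q by auto
    have "2 * m * (11 * s) \<le> 11 * (2 * n\<^sup>2)"
      using s_coarse by (simp add: n power2_eq_square algebra_simps)
    also have "\<dots> \<le> 11 * (q + 1) * cyclic_psi n"
      using mult_le_mono2[OF lower, of 11] by (simp only: mult.assoc)
    also have "\<dots> \<le> 14 * m * cyclic_psi n"
      using \<open>11 * (q + 1) \<le> 14 * m\<close> by (rule mult_right_mono) simp
    finally show ?thesis using q by simp
  qed
qed

lemma power_of_two_if_prime_factors_le_two:
  fixes n :: nat
  assumes "n > 0" "\<And>p. p \<in> prime_factors n \<Longrightarrow> p \<le> 2"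
  shows "n = 2 ^ multiplicity 2 n"
proof -
  obtain r where r: "n = 2 ^ multiplicity 2 n * r" "\<not> 2 dvd r"
    using multiplicity_decompose'[of n 2] assms(1) by auto
  have "r = 1"
  proof (rule ccontr)
    assume "r \<noteq> 1"
    then obtain p where p: "prime p" "p dvd r" using prime_factor_nat by blast
    moreover have "p dvd n" using p(2) by (subst r(1)) simp
    ultimately have "p \<in> prime_factors n" using assms(1) by (simp add: in_prime_factors_iff)
    then have "p = 2" using assms(2) prime_ge_2_nat[OF p(1)] by fastforce
    then show False using p r(2) by simp
  qed
  then show ?thesis using r(1) by simp
qed

section \<open>Transport along isomorphisms\<close>

lemma ord_iso:
  assumes G: "group G" and H: "group H" and h: "h \<in> iso G H" and x: "x \<in> carrier G"
  shows "group.ord H (h x) = group.ord G x"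
proof -
  interpret G: group G by (rule G)
  interpret H: group H by (rule H)
  interpret h: group_hom G H h
    using h by (simp add: group_hom_def group_hom_axioms_def G H iso_def)
  have inj: "inj_on h (carrier G)" using h by (simp add: iso_def bij_betw_def)
  have "h x [^]\<^bsub>H\<^esub> n = \<one>\<^bsub>H\<^esub> \<longleftrightarrow> G.ord x dvd n" for n :: nat
  proof -
    have "h x [^]\<^bsub>H\<^esub> n = \<one>\<^bsub>H\<^esub> \<longleftrightarrow> h (x [^]\<^bsub>G\<^esub> n) = h \<one>\<^bsub>G\<^esub>"
      using x by (simp add: h.hom_nat_pow)
    also have "\<dots> \<longleftrightarrow> x [^]\<^bsub>G\<^esub> n = \<one>\<^bsub>G\<^esub>"
      by (rule inj_on_eq_iff[OF inj]) (simp_all add: x)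
    finally show ?thesis using G.pow_eq_id[OF x] by simp
  qed
  then show ?thesis using H.ord_unique x by simp
qed

lemma psi_iso:
  assumes "group G" "group H" "h \<in> iso G H"
  shows "psi H = psi G"
proof -
  have "bij_betw h (carrier G) (carrier H)" using assms(3) by (simp add: iso_def)
  then have "psi H = (\<Sum>x\<in>carrier G. group.ord H (h x))"
    unfolding psi_def by (rule sum.reindex_bij_betw[symmetric])
  also have "\<dots> = psi G"
    unfolding psi_def by (rule sum.cong) (simp_all add: ord_iso[OF assms])
  finally show ?thesis .
qed

text \<open>A copy of a finite group on a fixed carrier type, so that an induction over all finite groups
  can be carried out at the single type \<open>nat monoid\<close>.\<close>
lemma ex_nat_monoid_copy:
  assumes K: "group K" and fin: "finite (carrier K)"
  shows "\<exists>H :: nat monoid. group H \<and> finite (carrier H) \<and> order H = order K \<and> psi H = psi K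
            \<and> (cyclic_group H \<longleftrightarrow> cyclic_group K)"
proof -
  interpret K: group K by (rule K)
  obtain f where "bij_betw f (carrier K) {0..<card (carrier K)}"
    using ex_bij_betw_finite_nat[OF fin] by blast
  then have inj: "inj_on f (carrier K)" by (simp add: bij_betw_def)
  define g where "g = inv_into (carrier K) f"
  have gf: "g (f a) = a" if "a \<in> carrier K" for a using inj that by (simp add: g_def)
  have gc: "g b \<in> carrier K" if "b \<in> f ` carrier K" for b using that by (simp add: g_def inv_into_into)
  have fg: "f (g b) = b" if "b \<in> f ` carrier K" for b using that by (simp add: g_def f_inv_into_f)
  define H :: "nat monoid" where
    "H = \<lparr>carrier = f ` carrier K, monoid.mult = (\<lambda>a b. f (g a \<otimes>\<^bsub>K\<^esub> g b)), one = f \<one>\<^bsub>K\<^esub>\<rparr>"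
  have "monoid H"
  proof (rule monoidI)
    fix x y z assume xyz: "x \<in> carrier H" "y \<in> carrier H" "z \<in> carrier H"
    then show "x \<otimes>\<^bsub>H\<^esub> y \<in> carrier H" by (auto simp: H_def intro!: imageI K.m_closed gc)
    show "x \<otimes>\<^bsub>H\<^esub> y \<otimes>\<^bsub>H\<^esub> z = x \<otimes>\<^bsub>H\<^esub> (y \<otimes>\<^bsub>H\<^esub> z)"
      using xyz by (simp add: H_def gf gc K.m_assoc)
  next
    fix x assume "x \<in> carrier H"
    then show "\<one>\<^bsub>H\<^esub> \<otimes>\<^bsub>H\<^esub> x = x" "x \<otimes>\<^bsub>H\<^esub> \<one>\<^bsub>H\<^esub> = x"
      by (simp_all add: H_def gf gc fg)
  qed (simp add: H_def)
  moreover have iso: "f \<in> iso K H"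
    unfolding iso_def hom_def using inj by (auto simp: H_def gf bij_betw_def)
  ultimately have "group H" using K.iso_imp_group is_isoI by blast
  then show ?thesis
    using fin iso_same_order[OF iso] psi_iso[OF K _ iso]
      isomorphic_group_cyclicity[OF is_isoI[OF iso] K] by (auto simp: H_def)
qed

section \<open>Cyclic subgroups of finite groups\<close>

context group
begin

lemma pow_mod_ord:
  assumes "x \<in> carrier G"
  shows "x [^] (k mod ord x) = x [^] (k::nat)"
proof -
  have "x [^] k = x [^] (ord x * (k div ord x) + k mod ord x)" by simp
  also have "\<dots> = (x [^] ord x) [^] (k div ord x) \<otimes> x [^] (k mod ord x)"
    using assms by (simp only: nat_pow_pow nat_pow_mult)
  also have "\<dots> = x [^] (k mod ord x)" using assms by simp
  finally show ?thesis by simp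
qed

lemma generate_singleton_eq_image:
  assumes "finite (carrier G)" "x \<in> carrier G"
  shows "generate G {x} = (\<lambda>j. x [^] j) ` {..<ord x}"
proof -
  have "{..<ord x} = {0..ord x - 1}" using ord_ge_1[OF assms] by auto
  then show ?thesis
    using generate_pow_on_finite_carrier[OF assms] ord_elems[OF assms] by auto
qed

lemma inj_on_pow_lessThan_ord:
  assumes "finite (carrier G)" "x \<in> carrier G"
  shows "inj_on (\<lambda>j. x [^] j) {..<ord x}"
proof -
  have "{..<ord x} = {0..ord x - 1}" using ord_ge_1[OF assms] by auto
  then show ?thesis using ord_inj[OF assms(2)] by simp
qed

lemma mem_generate_singleton_iff:
  assumes "finite (carrier G)" "x \<in> carrier G"
  shows "g \<in> generate G {x} \<longleftrightarrow> (\<exists>k::nat. g = x [^] k)"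
  using generate_pow_on_finite_carrier[OF assms] by auto

lemma generate_singleton_subset:
  "x \<in> carrier G \<Longrightarrow> generate G {x} \<subseteq> carrier G"
  by (simp add: generate_incl)

lemma sum_ord_generate_singleton:
  assumes "finite (carrier G)" "x \<in> carrier G"
  shows "(\<Sum>y\<in>generate G {x}. ord y) = cyclic_psi (ord x)"
proof -
  have "(\<Sum>y\<in>generate G {x}. ord y) = (\<Sum>j\<in>{..<ord x}. ord (x [^] j))"
    unfolding generate_singleton_eq_image[OF assms]
    by (rule sum.reindex_cong[OF inj_on_pow_lessThan_ord[OF assms]]) auto
  also have "\<dots> = cyclic_psi (ord x)"
    unfolding cyclic_psi_def
    by (rule sum.cong) (auto simp: ord_pow_gen[OF assms(2)] ord_ge_1[OF assms] Suc_le_eq)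
  finally show ?thesis .
qed

lemma ord_le_of_mem_generate:
  assumes "finite (carrier G)" "c \<in> carrier G" "w \<in> generate G {c}"
  shows "ord w \<le> ord c"
proof -
  obtain j :: nat where "w = c [^] j" using assms by (auto simp: mem_generate_singleton_iff)
  then show ?thesis
    using ord_pow_gen[OF assms(2), of j] ord_ge_1[OF assms(1,2)] by (auto intro: div_le_dividend)
qed

lemma generate_eq_carrier_if_ord_eq_order:
  assumes "finite (carrier G)" "x \<in> carrier G" "ord x = order G"
  shows "generate G {x} = carrier G"
  using card_subset_eq[OF assms(1) generate_singleton_subset[OF assms(2)]]
    generate_pow_card[OF assms(2)] assms(3) by (simp add: order_def)

lemma cyclic_group_iff_ex_ord_eq_order:
  assumes "finite (carrier G)"
  shows "cyclic_group G \<longleftrightarrow> (\<exists>x\<in>carrier G. ord x = order G)"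
proof
  assume "cyclic_group G"
  then obtain x where "x \<in> carrier G" "subgroup_generated G {x} = G"
    unfolding cyclic_group_def by blast
  then show "\<exists>x\<in>carrier G. ord x = order G" using cyclic_order_is_ord by metis
next
  assume "\<exists>x\<in>carrier G. ord x = order G"
  then obtain x where x: "x \<in> carrier G" and "generate G {x} = carrier G"
    using generate_eq_carrier_if_ord_eq_order[OF assms] by blast
  then have "carrier G = range (\<lambda>n::int. x [^] n)"
    unfolding generate_pow[OF x] by blast
  then show "cyclic_group G" using x cyclic_group by blast
qed

lemma psi_cyclic_group:
  assumes "finite (carrier G)" "cyclic_group G"
  shows "psi G = cyclic_psi (order G)"
proof -
  obtain x where "x \<in> carrier G" "ord x = order G"
    using assms cyclic_group_iff_ex_ord_eq_order by blast
  then show ?thesis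
    unfolding psi_def using assms(1) generate_eq_carrier_if_ord_eq_order sum_ord_generate_singleton
    by metis
qed

lemma psi_le_order_mult:
  assumes "\<And>g. g \<in> carrier G \<Longrightarrow> ord g \<le> M"
  shows "psi G \<le> order G * M"
proof -
  have "psi G \<le> (\<Sum>g\<in>carrier G. M)" unfolding psi_def using assms by (rule sum_mono)
  then show ?thesis by (simp add: order_def)
qed

lemma psi_le_cyclic_psi_ord_max:
  assumes fin: "finite (carrier G)" and x: "x \<in> carrier G"
    and x_max: "\<And>g. g \<in> carrier G \<Longrightarrow> ord g \<le> ord x"
  shows "psi G \<le> cyclic_psi (ord x) + (order G - ord x) * ord x"
proof -
  have sub: "generate G {x} \<subseteq> carrier G" by (rule generate_singleton_subset[OF x])
  have "psi G = (\<Sum>g\<in>generate G {x}. ord g) + (\<Sum>g\<in>carrier G - generate G {x}. ord g)"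
    unfolding psi_def using sum.subset_diff[OF sub fin] by (simp add: add.commute)
  also have "(\<Sum>g\<in>carrier G - generate G {x}. ord g) \<le> (\<Sum>g\<in>carrier G - generate G {x}. ord x)"
    using x_max by (intro sum_mono) auto
  also have "\<dots> = (order G - ord x) * ord x"
    using card_Diff_subset[OF finite_subset[OF sub fin] sub] generate_pow_card[OF x]
    by (simp add: order_def)
  finally show ?thesis by (simp add: sum_ord_generate_singleton[OF fin x])
qed

lemma subgroup_nat_pow_closed:
  assumes "subgroup H G" "h \<in> H"
  shows "h [^] (n::nat) \<in> H"
  using subgroup_int_pow_closed[OF assms, of "int n"] by (simp add: int_pow_int)

text \<open>Pigeonhole on the cosets \<open>H #> g [^] i\<close> for \<open>i \<le> [G : H]\<close>.\<close>
lemma ex_pow_mem_subgroup_le_index: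
  assumes fin: "finite (carrier G)" and H: "subgroup H G" and g: "g \<in> carrier G"
  obtains j where "1 \<le> j" "j \<le> card (rcosets H)" "g [^] j \<in> H"
proof -
  let ?m = "card (rcosets H)"
  let ?f = "\<lambda>i::nat. H #> g [^] i"
  have "?f ` {0..?m} \<subseteq> rcosets H"
    using subgroup.subset[OF H] g by (auto intro: rcosetsI)
  moreover have "finite (rcosets H)"
    using fin rcosets_subset_PowG[OF H] by (metis finite_Pow_iff finite_subset)
  ultimately have "\<not> inj_on ?f {0..?m}"
    using card_inj_on_le by (metis Suc_n_not_le_n card_atLeastAtMost minus_nat.diff_0)
  then obtain i i' where ii: "i \<le> ?m" "i' \<le> ?m" "i \<noteq> i'" "?f i = ?f i'"
    by (auto simp: inj_on_def)
  obtain u v where uv: "u < v" "v \<le> ?m" "H #> g [^] u = H #> g [^] v"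
  proof (cases "i < i'")
    case True
    then show ?thesis using that ii by auto
  next
    case False
    then show ?thesis using that[of i' i] ii by auto
  qed
  have "g [^] v \<in> H #> g [^] u" using uv(3) g H by (simp add: rcos_self)
  then have "g [^] v \<otimes> inv (g [^] u) \<in> H" using H g by (simp add: subgroup.rcos_module_imp)
  moreover have "g [^] v = g [^] (v - u) \<otimes> g [^] u"
    using uv(1) g by (simp add: nat_pow_mult)
  then have "g [^] (v - u) = g [^] v \<otimes> inv (g [^] u)"
    by (metis g inv_solve_right nat_pow_closed)
  ultimately show ?thesis using that[of "v - u"] uv by simp
qed

lemma mem_subgroup_if_pow_mem_coprime:
  assumes H: "subgroup H G" and g: "g \<in> carrier G"
    and pow_mem: "g [^] j \<in> H" and cop: "coprime j (ord g)"
  shows "g \<in> H"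
proof -
  obtain s where s: "[j * s = 1] (mod ord g)" using cong_solve_coprime_nat[OF cop] by auto
  have "(g [^] j) [^] s = g [^] (j * s mod ord g)"
    unfolding pow_mod_ord[OF g] using g by (rule nat_pow_pow)
  also have "\<dots> = g [^] (1 mod ord g)"
    using s unfolding cong_def by (rule arg_cong)
  also have "\<dots> = g"
    unfolding pow_mod_ord[OF g] using g by simp
  finally show ?thesis
    using subgroup_nat_pow_closed[OF H pow_mem, of s] by simp
qed

lemma mem_subgroup_if_coprime_index:
  assumes fin: "finite (carrier G)" and H: "subgroup H G" and g: "g \<in> carrier G"
    and cop: "\<And>j. 1 \<le> j \<Longrightarrow> j \<le> card (rcosets H) \<Longrightarrow> coprime j (ord g)"
  shows "g \<in> H"
  using ex_pow_mem_subgroup_le_index[OF fin H g] mem_subgroup_if_pow_mem_coprime[OF H g] cop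
  by metis

lemma ord_mult_if_coprime:
  assumes ab: "a \<otimes> b = b \<otimes> a" "a \<in> carrier G" "b \<in> carrier G"
    and cop: "coprime (ord a) (ord b)"
  shows "ord (a \<otimes> b) = ord a * ord b"
proof (rule dvd_antisym)
  show "ord (a \<otimes> b) dvd ord a * ord b" using ord_mul_divides[OF ab] .
  let ?n = "ord (a \<otimes> b)"
  have a: "a \<in> carrier G" and b: "b \<in> carrier G" using ab(2,3) .
  define w where "w = a [^] ?n"
  have w: "w \<in> carrier G" using a by (simp add: w_def)
  have "w \<otimes> b [^] ?n = \<one>"
    unfolding w_def using pow_mult_distrib[OF ab, of ?n] a b by simp
  then have inv_w: "inv (b [^] ?n) = w" by (rule inv_equality) (use w b in auto)
  have "w [^] ord a = (a [^] ord a) [^] ?n"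
    unfolding w_def using a by (simp only: nat_pow_pow mult.commute)
  then have "ord w dvd ord a" using a w by (simp add: pow_eq_id[symmetric])
  moreover have "w [^] ord b = inv ((b [^] ord b) [^] ?n)"
    unfolding inv_w[symmetric] using b by (simp only: nat_pow_closed nat_pow_inv nat_pow_pow mult.commute)
  then have "ord w dvd ord b" using b w by (simp add: pow_eq_id[symmetric])
  ultimately have "ord w = 1" using cop coprime_common_divisor_nat by blast
  then have "w = \<one>" using w ord_eq_1 by simp
  then have "a [^] ?n = \<one>" "b [^] ?n = \<one>"
    using inv_w b unfolding w_def by (simp_all add: inv_eq_one_eq)
  then show "ord a * ord b dvd ?n" using a b cop by (simp add: pow_eq_id divides_mult)
qed

lemma conj_pow:
  assumes "h \<in> carrier G" "g \<in> carrier G"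
  shows "(h \<otimes> g \<otimes> inv h) [^] (n::nat) = h \<otimes> g [^] n \<otimes> inv h"
proof (induction n)
  case 0
  then show ?case using assms by simp
next
  case (Suc n)
  have "(h \<otimes> g \<otimes> inv h) [^] Suc n = (h \<otimes> g [^] n \<otimes> inv h) \<otimes> (h \<otimes> g \<otimes> inv h)"
    using Suc by simp
  also have "\<dots> = h \<otimes> (g [^] n \<otimes> g) \<otimes> inv h"
    using assms by (simp add: m_assoc) (simp add: m_assoc[symmetric])
  finally show ?case by simp
qed

lemma normal_if_eq_pow_eq_one:
  assumes "subgroup H G" "H = {g \<in> carrier G. g [^] (n::nat) = \<one>}"
  shows "H \<lhd> G"
proof -
  have "h \<otimes> g \<otimes> inv h \<in> H" if "h \<in> carrier G" "g \<in> H" for g h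
    using that assms(2) by (simp add: conj_pow)
  then show ?thesis using assms(1) normal_inv_iff by blast
qed

definition centralizer :: "'a set \<Rightarrow> 'a set" where
  "centralizer S = {g \<in> carrier G. \<forall>s\<in>S. g \<otimes> s = s \<otimes> g}"

lemma subgroup_centralizer:
  assumes "S \<subseteq> carrier G"
  shows "subgroup (centralizer S) G"
proof (rule subgroupI)
  show "centralizer S \<subseteq> carrier G"
    by (auto simp: centralizer_def)
  have "\<one> \<in> centralizer S"
    using assms by (auto simp: centralizer_def)
  then show "centralizer S \<noteq> {}" by blast
next
  fix g assume g: "g \<in> centralizer S"
  have "inv g \<otimes> s = s \<otimes> inv g" if "s \<in> S" for s
  proof -
    have "g \<otimes> s = s \<otimes> g" "s \<in> carrier G" "g \<in> carrier G"
      using g that assms by (auto simp: centralizer_def)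
    then show ?thesis by (simp add: inv_solve_left inv_solve_right m_assoc)
  qed
  then show "inv g \<in> centralizer S" using g by (simp add: centralizer_def)
next
  fix g h assume g: "g \<in> centralizer S" and h: "h \<in> centralizer S"
  have "g \<otimes> h \<otimes> s = s \<otimes> (g \<otimes> h)" if "s \<in> S" for s
  proof -
    have c: "g \<in> carrier G" "h \<in> carrier G" "s \<in> carrier G" and "g \<otimes> s = s \<otimes> g" "h \<otimes> s = s \<otimes> h"
      using g h that assms by (auto simp: centralizer_def)
    have "g \<otimes> h \<otimes> s = (g \<otimes> s) \<otimes> h" using c \<open>h \<otimes> s = s \<otimes> h\<close> by (simp add: m_assoc)
    also have "\<dots> = s \<otimes> (g \<otimes> h)"
      unfolding \<open>g \<otimes> s = s \<otimes> g\<close> using c by (simp add: m_assoc)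
    finally show ?thesis .
  qed
  then show "g \<otimes> h \<in> centralizer S" using g h by (auto simp: centralizer_def)
qed

lemma pow_mem_subgroup_iff_dvd:
  assumes H: "subgroup H G" and y: "y \<in> carrier G" and "ord y > 0"
  obtains d where "d > 0" "d dvd ord y" "\<And>i::nat. y [^] i \<in> H \<longleftrightarrow> d dvd i"
proof -
  define d where "d = (LEAST i::nat. 0 < i \<and> y [^] i \<in> H)"
  have "0 < ord y \<and> y [^] ord y \<in> H" using assms by (simp add: subgroup.one_closed)
  then have d: "0 < d" "y [^] d \<in> H" unfolding d_def by (metis (mono_tags, lifting) LeastI)+
  have d_dvd: "d dvd i" if mem: "y [^] i \<in> H" for i
  proof (rule ccontr)
    assume "\<not> d dvd i"
    then have "0 < i mod d" by (simp add: mod_greater_zero_iff_not_dvd)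
    have "y [^] i = (y [^] d) [^] (i div d) \<otimes> y [^] (i mod d)"
      using y by (simp add: nat_pow_pow nat_pow_mult)
    then have "y [^] (i mod d) = inv ((y [^] d) [^] (i div d)) \<otimes> y [^] i"
      using y by (simp add: inv_solve_left)
    also have "\<dots> \<in> H"
      using H d(2) mem by (simp add: subgroup.m_closed subgroup.m_inv_closed subgroup_nat_pow_closed)
    finally have "y [^] (i mod d) \<in> H" .
    then have "d \<le> i mod d"
      using \<open>0 < i mod d\<close> unfolding d_def by (intro Least_le) simp
    then show False using d(1) mod_less_divisor[of d i] by linarith
  qed
  have "y [^] i \<in> H" if dvd: "d dvd i" for i
  proof -
    obtain k where "i = d * k" using dvd by blast
    then have "y [^] i = (y [^] d) [^] k" using y by (simp add: nat_pow_pow)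
    then show ?thesis using subgroup_nat_pow_closed[OF H d(2)] by simp
  qed
  then show ?thesis
    using that d(1) d_dvd \<open>0 < ord y \<and> y [^] ord y \<in> H\<close> by blast
qed

lemma mem_generate_if_pow_ord_eq_one:
  assumes fin: "finite (carrier G)" and x: "x \<in> carrier G"
    and c: "c \<in> generate G {x}" and w: "w \<in> generate G {x}" and w_pow: "w [^] ord c = \<one>"
  shows "w \<in> generate G {c}"
proof -
  let ?N = "ord x"
  have "?N > 0" using ord_ge_1[OF fin x] by simp
  obtain i0 :: nat where "c = x [^] i0" using c unfolding mem_generate_singleton_iff[OF fin x] by blast
  define i where "i = i0 + ?N" \<comment> \<open>a positive exponent for \<open>c\<close>\<close>
  have ci: "c = x [^] i" using x \<open>c = x [^] i0\<close> by (simp add: i_def nat_pow_mult[symmetric])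
  have "i \<noteq> 0" using \<open>?N > 0\<close> by (simp add: i_def)
  obtain j :: nat where wj: "w = x [^] j" using w unfolding mem_generate_singleton_iff[OF fin x] by blast
  define g where "g = gcd ?N i"
  have "g dvd ?N" by (simp add: g_def)
  then obtain M where NM: "?N = g * M" by blast
  have "M > 0" "g > 0" using NM \<open>?N > 0\<close> by simp_all
  have "ord c = ?N div g" using ord_pow_gen[OF x, of i] \<open>i \<noteq> 0\<close> ci by (simp add: g_def)
  also have "\<dots> = M" using NM \<open>g > 0\<close> by simp
  finally have "x [^] (j * M) = \<one>" using w_pow x by (simp add: wj nat_pow_pow)
  then have "g * M dvd j * M" using pow_eq_id[OF x] NM by simp
  then obtain j' where j': "j = g * j'" using \<open>M > 0\<close> by (auto elim: dvdE)
  \<comment> \<open>Bezout: \<open>x [^] g\<close>, and hence \<open>w\<close>, is a power of \<open>c\<close>\<close>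
  obtain s t where st: "i * s = ?N * t + g"
    using bezout_nat[OF \<open>i \<noteq> 0\<close>, of ?N] unfolding g_def gcd.commute[of i] by blast
  have "i * (s * j') = (?N * t + g) * j'" by (simp add: st[symmetric] mult.assoc)
  also have "\<dots> = ?N * (t * j') + j" by (simp add: j' algebra_simps)
  finally have "c [^] (s * j') = x [^] (?N * (t * j')) \<otimes> x [^] j"
    using x by (simp add: ci nat_pow_pow nat_pow_mult)
  also have "\<dots> = w" using x by (simp add: wj nat_pow_pow[symmetric])
  finally have "\<exists>k::nat. w = c [^] k" by (intro exI[of _ "s * j'"]) simp
  moreover have "c \<in> carrier G" using ci x by simp
  ultimately show ?thesis using mem_generate_singleton_iff[OF fin] by simp
qed

lemma mem_generate_if_ord_prime_power_index_lt:
  assumes fin: "finite (carrier G)" and x: "x \<in> carrier G"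
    and index: "order G = ord x * m" and q: "prime q" "m < q"
    and g: "g \<in> carrier G" "ord g = q ^ i"
  shows "g \<in> generate G {x}"
proof (rule mem_subgroup_if_coprime_index[OF fin _ g(1)])
  show H: "subgroup (generate G {x}) G" using x by (simp add: generate_is_subgroup)
  have "card (rcosets (generate G {x})) * ord x = ord x * m"
    using lagrange[OF H] generate_pow_card[OF x] index by simp
  then have "card (rcosets (generate G {x})) = m" using ord_ge_1[OF fin x] by simp
  fix j assume "1 \<le> j" "j \<le> card (rcosets (generate G {x}))"
  then have "\<not> q dvd j" using q(2) \<open>card (rcosets (generate G {x})) = m\<close> by (auto dest: dvd_imp_le)
  then have "coprime q j" using q(1) by (simp add: prime_imp_coprime)
  then show "coprime j (ord g)" by (simp add: g(2) coprime_commute)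
qed

lemma generate_eq_pow_eq_one_if_index_lt:
  assumes fin: "finite (carrier G)" and x: "x \<in> carrier G"
    and index: "order G = ord x * m" and q: "prime q" "m < q"
    and ord_x: "ord x = q ^ a * L"
  shows "generate G {x [^] L} = {g \<in> carrier G. g [^] (q ^ a) = \<one>}"
proof -
  have "ord x > 0" using ord_ge_1[OF fin x] by simp
  then have "L \<noteq> 0" using ord_x by auto
  then have ord_xL: "ord (x [^] L) = q ^ a"
    using ord_pow[OF x, of L] ord_x \<open>ord x > 0\<close> by simp
  show ?thesis
  proof (intro equalityI subsetI)
    fix g
    assume "g \<in> generate G {x [^] L}"
    then obtain k :: nat where g: "g = (x [^] L) [^] k"
      unfolding mem_generate_singleton_iff[OF fin nat_pow_closed[OF x]] by blast
    then have "g [^] (q ^ a) = ((x [^] L) [^] ord (x [^] L)) [^] k"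
      using x by (simp add: ord_xL nat_pow_pow ac_simps)
    then show "g \<in> {g \<in> carrier G. g [^] (q ^ a) = \<one>}"
      using x g by simp
  next
    fix g
    assume "g \<in> {g \<in> carrier G. g [^] (q ^ a) = \<one>}"
    then have g: "g \<in> carrier G" "g [^] (q ^ a) = \<one>" by auto
    obtain i where "ord g = q ^ i"
      using g pow_eq_id divides_primepow_nat[OF q(1)] by auto
    then have "g \<in> generate G {x}"
      using mem_generate_if_ord_prime_power_index_lt[OF fin x index q g(1)] by blast
    moreover have "x [^] L \<in> generate G {x}"
      unfolding mem_generate_singleton_iff[OF fin x] by blast
    ultimately show "g \<in> generate G {x [^] L}"
      using mem_generate_if_pow_ord_eq_one[OF fin x] g(2) ord_xL by simp
  qed
qed

end

lemma psi_integer_mod_group: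
  assumes "n \<ge> 1"
  shows "psi (integer_mod_group n) = cyclic_psi n"
proof (cases "n = 1")
  case True
  then have "carrier (integer_mod_group n) = {0}" by (auto simp: carrier_integer_mod_group)
  then show ?thesis using True group.ord_id[OF group_integer_mod_group, of n] by (simp add: psi_def)
next
  case False
  interpret Z: group "integer_mod_group n" by simp
  have fin: "finite (carrier (integer_mod_group n))" using assms by (simp add: carrier_integer_mod_group)
  have one: "(1::int) \<in> carrier (integer_mod_group n)" using False by simp
  have "1 [^]\<^bsub>integer_mod_group n\<^esub> k = \<one>\<^bsub>integer_mod_group n\<^esub> \<longleftrightarrow> n dvd k" for k :: nat
    using one by (simp add: mod_eq_0_iff_dvd)
  then have "Z.ord 1 = n" using Z.ord_unique[OF one] by blast
  moreover have "order (integer_mod_group n) = n"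
    using assms by (simp add: order_def carrier_integer_mod_group)
  ultimately show ?thesis
    using Z.psi_cyclic_group[OF fin] Z.cyclic_group_iff_ex_ord_eq_order[OF fin] one by auto
qed

section \<open>Groups with a normal cyclic Sylow subgroup\<close>

locale normal_cyclic_sylow = group +
  fixes q a :: nat and z :: 'a
  assumes finite_carrier: "finite (carrier G)"
    and prime_q: "prime q" and a_pos: "a \<ge> 1"
    and gen_carrier: "z \<in> carrier G" and ord_gen: "ord z = q ^ a"
    and normal_sylow: "generate G {z} \<lhd> G"
    and coprime_index: "coprime (q ^ a) (order G div q ^ a)"
begin

abbreviation P :: "'a set" where "P \<equiv> generate G {z}"

abbreviation K :: "'a set monoid" where "K \<equiv> G Mod P"

lemma subgroup_P: "subgroup P G"
  using normal_sylow by (rule normal_imp_subgroup)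

lemma P_subset: "P \<subseteq> carrier G"
  using gen_carrier by (rule generate_singleton_subset)

lemma mem_P_iff: "c \<in> P \<longleftrightarrow> (\<exists>k::nat. c = z [^] k)"
  using mem_generate_singleton_iff[OF finite_carrier gen_carrier] .

lemma card_P: "card P = q ^ a"
  using generate_pow_card[OF gen_carrier] ord_gen by simp

lemma P_comm: "c \<in> P \<Longrightarrow> c' \<in> P \<Longrightarrow> c \<otimes> c' = c' \<otimes> c"
  using gen_carrier by (auto simp: mem_P_iff nat_pow_mult add.commute)

lemma P_subset_centralizer: "P \<subseteq> centralizer P"
  using P_comm P_subset by (auto simp: centralizer_def)

lemma ord_dvd_of_mem_P:
  assumes "c \<in> P"
  shows "ord c dvd q ^ a"
proof -
  obtain k :: nat where "c = z [^] k" using assms mem_P_iff by blast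
  then have "c [^] (q ^ a) = (z [^] ord z) [^] k"
    using gen_carrier by (simp add: ord_gen nat_pow_pow mult.commute)
  then show ?thesis using assms P_subset gen_carrier by (auto simp: pow_eq_id[symmetric])
qed

lemma conj_mem_generate:
  assumes h: "h \<in> carrier G" and c: "c \<in> P"
  shows "h \<otimes> c \<otimes> inv h \<in> generate G {c}"
proof (rule mem_generate_if_pow_ord_eq_one[OF finite_carrier gen_carrier c])
  have "c \<in> carrier G" using c P_subset by auto
  then show "(h \<otimes> c \<otimes> inv h) [^] ord c = \<one>" using h by (simp add: conj_pow)
  show "h \<otimes> c \<otimes> inv h \<in> P" using normal.inv_op_closed2[OF normal_sylow h c] .
qed

lemma pow_mult_eq_mem_generate:
  assumes c: "c \<in> P" and r: "r \<in> carrier G"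
  shows "\<exists>w\<in>generate G {c}. (c \<otimes> r) [^] (i::nat) = w \<otimes> r [^] i"
proof (induction i)
  case 0
  have "\<one> \<in> generate G {c}" by (rule generate.one)
  then show ?case by force
next
  case (Suc i)
  have cc: "c \<in> carrier G" using c P_subset by auto
  have H: "subgroup (generate G {c}) G" using cc by (simp add: generate_is_subgroup)
  obtain w where w: "w \<in> generate G {c}" "(c \<otimes> r) [^] i = w \<otimes> r [^] i" using Suc by blast
  have wc: "w \<in> carrier G" using w(1) generate_singleton_subset[OF cc] by auto
  define w' where "w' = r [^] i \<otimes> c \<otimes> inv (r [^] i)"
  have w': "w' \<in> generate G {c}" unfolding w'_def using r c by (simp add: conj_mem_generate)
  have "(c \<otimes> r) [^] Suc i = w \<otimes> r [^] i \<otimes> (c \<otimes> r)" using w(2) by simp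
  also have "\<dots> = (w \<otimes> w') \<otimes> r [^] Suc i"
    unfolding w'_def using wc cc r by (simp add: m_assoc inv_solve_left)
  finally show ?case using subgroup.m_closed[OF H w(1) w'] by blast
qed

lemma group_K: "group K"
  using normal.factorgroup_is_group[OF normal_sylow] .

lemma carrier_K: "carrier K = rcosets P"
  by (simp add: FactGroup_def)

lemma finite_K: "finite (carrier K)"
  unfolding carrier_K using finite_carrier rcosets_subset_PowG[OF subgroup_P]
  by (metis finite_Pow_iff finite_subset)

lemma order_K: "order K * q ^ a = order G"
  using lagrange[OF subgroup_P] card_P by (simp add: order_def carrier_K)

lemma coset_pow_K: "g \<in> carrier G \<Longrightarrow> (P #> g) [^]\<^bsub>K\<^esub> (n::nat) = P #> (g [^] n)"
  using normal.FactGroup_pow[OF normal_sylow] by simp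

lemma ord_K_dvd_iff:
  assumes g: "g \<in> carrier G"
  shows "group.ord K (P #> g) dvd n \<longleftrightarrow> g [^] n \<in> P"
proof -
  have "P #> g \<in> carrier K" unfolding carrier_K using P_subset g by (rule rcosetsI)
  then have "group.ord K (P #> g) dvd n \<longleftrightarrow> (P #> g) [^]\<^bsub>K\<^esub> n = \<one>\<^bsub>K\<^esub>"
    using group.pow_eq_id[OF group_K] by simp
  also have "\<dots> \<longleftrightarrow> P #> (g [^] n) = P"
    using coset_pow_K[OF g] by simp
  also have "\<dots> \<longleftrightarrow> g [^] n \<in> P"
    using coset_join1[of P "g [^] n"] coset_join2[of "g [^] n" P] subgroup_P g by auto
  finally show ?thesis .
qed

lemma order_K_eq: "order K = order G div q ^ a"
  using order_K[symmetric] prime_gt_0_nat[OF prime_q] by simp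

lemma coprime_ord_K_ord_P:
  assumes "Cs \<in> carrier K" "c \<in> P"
  shows "coprime (group.ord K Cs) (ord c)"
proof -
  have "group.ord K Cs dvd order G div q ^ a"
    using group.ord_dvd_group_order[OF group_K assms(1)] order_K_eq by simp
  then show ?thesis
    using coprime_index ord_dvd_of_mem_P[OF assms(2)]
    by (metis coprime_commute coprime_divisors)
qed

lemma ord_eq_ord_K_mult:
  assumes g: "g \<in> carrier G"
  shows "ord g = group.ord K (P #> g) * ord (g [^] group.ord K (P #> g))"
proof -
  let ?t = "group.ord K (P #> g)"
  have "?t dvd ord g" using g ord_K_dvd_iff subgroup.one_closed[OF subgroup_P] by simp
  moreover have "?t \<noteq> 0"
    using group.ord_ge_1[OF group_K finite_K, of "P #> g"] P_subset g by (simp add: carrier_K rcosetsI)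
  ultimately show ?thesis using ord_pow[OF g] by simp
qed

text \<open>The two factors of \<open>ord g\<close> in \<open>ord_eq_ord_K_mult\<close> are coprime, so a suitable power of \<open>g\<close>
  kills the \<open>P\<close>-part of its order without leaving the coset.\<close>
lemma ex_coset_rep_ord_eq:
  assumes Cs: "Cs \<in> carrier K"
  shows "\<exists>r\<in>carrier G. Cs = P #> r \<and> ord r = group.ord K Cs"
proof -
  obtain g where g: "g \<in> carrier G" "Cs = P #> g" using Cs unfolding carrier_K RCOSETS_def by blast
  define t where "t = group.ord K Cs"
  define s where "s = ord (g [^] t)"
  have ord_g: "ord g = t * s" unfolding s_def t_def g(2) by (rule ord_eq_ord_K_mult[OF g(1)])
  have "g [^] t \<in> P" using ord_K_dvd_iff[OF g(1), of t] by (simp add: t_def g(2))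
  then have "coprime t s" unfolding t_def s_def using coprime_ord_K_ord_P[OF Cs] by blast
  then obtain s' where s': "[s * s' = Suc 0] (mod t)"
    using cong_solve_coprime_nat[of s t] by (auto simp: coprime_commute)
  have "s \<noteq> 0" using ord_ge_1[OF finite_carrier, of "g [^] t"] g(1) by (simp add: s_def)
  then have ord_gs: "ord (g [^] s) = t" using ord_pow[OF g(1), of s] ord_g by simp
  have "coprime s' t"
    using coprime_iff_invertible_nat[of s' t] s' by (auto simp: mult.commute)
  define r where "r = (g [^] s) [^] s'"
  have r: "r \<in> carrier G" unfolding r_def using g by simp
  have "ord r = t"
    unfolding r_def using pow_ord_eq_ord_iff[OF finite_carrier, of "g [^] s" s'] g(1) \<open>coprime s' t\<close> ord_gs
    by simp
  have "P #> r = Cs [^]\<^bsub>K\<^esub> (s * s')"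
    unfolding r_def g(2) using g(1) by (simp add: coset_pow_K nat_pow_pow)
  also have "\<dots> = Cs [^]\<^bsub>K\<^esub> (s * s' mod t)"
    using group.pow_mod_ord[OF group_K Cs] by (simp add: t_def)
  also have "\<dots> = Cs [^]\<^bsub>K\<^esub> (1 mod t)"
    using s' by (simp add: cong_def)
  also have "\<dots> = Cs [^]\<^bsub>K\<^esub> (1::nat)"
    unfolding t_def by (rule group.pow_mod_ord[OF group_K Cs])
  also have "\<dots> = Cs"
    by (rule monoid.nat_pow_eone[OF group.is_monoid[OF group_K] Cs])
  finally show ?thesis using r \<open>ord r = t\<close> by (auto simp: t_def)
qed

lemma psi_eq_sum_cosets: "psi G = (\<Sum>Cs\<in>carrier K. \<Sum>g\<in>Cs. ord g)"
proof -
  have "\<forall>Cs\<in>rcosets P. finite Cs"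
    using rcosets_part_G[OF subgroup_P] finite_carrier by (metis Union_upper finite_subset)
  moreover have "\<forall>A\<in>rcosets P. \<forall>B\<in>rcosets P. A \<noteq> B \<longrightarrow> A \<inter> B = {}"
    using rcos_disjoint[OF subgroup_P] by (auto simp: pairwise_def disjnt_def)
  ultimately have "(\<Sum>g\<in>\<Union>(rcosets P). ord g) = (\<Sum>Cs\<in>rcosets P. \<Sum>g\<in>Cs. ord g)"
    by (simp add: sum.Union_disjoint o_def)
  then show ?thesis
    unfolding psi_def carrier_K using rcosets_part_G[OF subgroup_P] by simp
qed

lemma sum_ord_coset:
  assumes r: "r \<in> carrier G"
  shows "(\<Sum>g\<in>P #> r. ord g) = (\<Sum>c\<in>P. ord (c \<otimes> r))"
proof -
  have "P #> r = (\<lambda>c. c \<otimes> r) ` P" unfolding r_coset_def by auto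
  moreover have "inj_on (\<lambda>c. c \<otimes> r) P"
  proof (rule inj_onI)
    fix x y assume "x \<in> P" "y \<in> P" "x \<otimes> r = y \<otimes> r"
    moreover have "x \<in> carrier G" "y \<in> carrier G" using \<open>x \<in> P\<close> \<open>y \<in> P\<close> P_subset by auto
    ultimately show "x = y" using r by simp
  qed
  ultimately show ?thesis by (simp add: sum.reindex)
qed

lemma ord_mult_coset_rep:
  assumes r: "r \<in> carrier G" and ord_r: "ord r = group.ord K (P #> r)" and c: "c \<in> P"
  defines "t \<equiv> group.ord K (P #> r)"
  shows "ord (c \<otimes> r) = t * ord ((c \<otimes> r) [^] t)"
    and "(c \<otimes> r) [^] t \<in> generate G {c}"
proof -
  have cc: "c \<in> carrier G" using c P_subset by auto
  have "c \<otimes> r \<in> P #> r" by (rule rcosI[OF c P_subset r])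
  then have "P #> r = P #> (c \<otimes> r)" by (rule repr_independence[OF _ r subgroup_P])
  then show "ord (c \<otimes> r) = t * ord ((c \<otimes> r) [^] t)"
    unfolding t_def using ord_eq_ord_K_mult[of "c \<otimes> r"] cc r by simp
  obtain w where w: "w \<in> generate G {c}" "(c \<otimes> r) [^] t = w \<otimes> r [^] t"
    using pow_mult_eq_mem_generate[OF c r] by blast
  have "r [^] t = \<one>" using r ord_r by (simp add: t_def flip: ord_r)
  then show "(c \<otimes> r) [^] t \<in> generate G {c}"
    using w generate_singleton_subset[OF cc] by auto
qed

lemma sum_ord_coset_le:
  assumes r: "r \<in> carrier G" and ord_r: "ord r = group.ord K (P #> r)"
  shows "(\<Sum>g\<in>P #> r. ord g) \<le> group.ord K (P #> r) * cyclic_psi (q ^ a)"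
proof -
  let ?t = "group.ord K (P #> r)"
  have "ord (c \<otimes> r) \<le> ?t * ord c" if c: "c \<in> P" for c
  proof -
    have "c \<in> carrier G" using c P_subset by auto
    then have "ord ((c \<otimes> r) [^] ?t) \<le> ord c"
      using ord_le_of_mem_generate[OF finite_carrier _ ord_mult_coset_rep(2)[OF r ord_r c]] by simp
    then show ?thesis using ord_mult_coset_rep(1)[OF r ord_r c] by simp
  qed
  then have "(\<Sum>c\<in>P. ord (c \<otimes> r)) \<le> (\<Sum>c\<in>P. ?t * ord c)" by (rule sum_mono)
  also have "\<dots> = ?t * (\<Sum>c\<in>P. ord c)"
    by (rule sum_distrib_left[symmetric])
  also have "\<dots> = ?t * cyclic_psi (q ^ a)"
    using sum_ord_generate_singleton[OF finite_carrier gen_carrier] ord_gen by simp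
  finally show ?thesis using sum_ord_coset[OF r] by simp
qed

lemma centralizer_if_pow_generates_P:
  assumes g: "g \<in> carrier G" and gen: "generate G {g [^] (n::nat)} = P"
  shows "g \<in> centralizer P"
proof -
  have "g [^] n \<in> centralizer {g}"
    using g by (simp add: centralizer_def nat_pow_comm[of g n 1, simplified])
  then have "P \<subseteq> centralizer {g}"
    unfolding gen[symmetric] using g by (intro generate_subgroup_incl subgroup_centralizer) auto
  then show ?thesis using g by (auto simp: centralizer_def)
qed

lemma ord_le_if_not_generates_P:
  assumes w: "w \<in> P" and not_gen: "generate G {w} \<noteq> P"
  shows "ord w \<le> q ^ (a - 1)"
proof -
  have "ord w \<noteq> q ^ a"
  proof
    assume "ord w = q ^ a"
    then have "card (generate G {w}) = card P"
      using generate_pow_card w P_subset card_P by auto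
    moreover have "generate G {w} \<subseteq> P"
      using w by (intro generate_subgroup_incl[OF _ subgroup_P]) auto
    ultimately show False
      using card_subset_eq[OF finite_subset[OF P_subset finite_carrier]] not_gen by blast
  qed
  moreover obtain i where "i \<le> a" "ord w = q ^ i"
    using ord_dvd_of_mem_P[OF w] divides_primepow_nat[OF prime_q] by blast
  ultimately have "i \<le> a - 1" by (cases "i = a") auto
  then show ?thesis
    using \<open>ord w = q ^ i\<close> prime_gt_0_nat[OF prime_q] by (simp add: power_increasing)
qed

lemma sum_ord_coset_le_if_not_centralizer:
  assumes r: "r \<in> carrier G" and ord_r: "ord r = group.ord K (P #> r)"
    and not_centr: "r \<notin> centralizer P"
  shows "(\<Sum>g\<in>P #> r. ord g) \<le> group.ord K (P #> r) * (q ^ a * q ^ (a - 1))"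
proof -
  let ?t = "group.ord K (P #> r)"
  have "ord (c \<otimes> r) \<le> ?t * q ^ (a - 1)" if c: "c \<in> P" for c
  proof -
    have cc: "c \<in> carrier G" using c P_subset by auto
    have "generate G {(c \<otimes> r) [^] ?t} \<noteq> P"
    proof
      assume "generate G {(c \<otimes> r) [^] ?t} = P"
      then have "c \<otimes> r \<in> centralizer P" using cc r by (intro centralizer_if_pow_generates_P) auto
      then have "inv c \<otimes> (c \<otimes> r) \<in> centralizer P"
        using c P_subset_centralizer subgroup_centralizer[OF P_subset]
        by (auto intro: subgroup.m_closed subgroup.m_inv_closed)
      then show False using not_centr cc r by (simp add: m_assoc[symmetric])
    qed
    moreover have "(c \<otimes> r) [^] ?t \<in> P"
      using ord_mult_coset_rep(2)[OF r ord_r c] generate_subgroup_incl[OF _ subgroup_P, of "{c}"] c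
      by auto
    ultimately show ?thesis
      using ord_le_if_not_generates_P ord_mult_coset_rep(1)[OF r ord_r c] by simp
  qed
  then have "(\<Sum>c\<in>P. ord (c \<otimes> r)) \<le> (\<Sum>c\<in>P. ?t * q ^ (a - 1))" by (rule sum_mono)
  also have "\<dots> = ?t * (q ^ a * q ^ (a - 1))" by (simp add: card_P)
  finally show ?thesis using sum_ord_coset[OF r] by simp
qed

lemma psi_le_cyclic_psi_mult_psi_quotient: "psi G \<le> cyclic_psi (q ^ a) * psi K"
proof -
  have "(\<Sum>g\<in>Cs. ord g) \<le> group.ord K Cs * cyclic_psi (q ^ a)" if "Cs \<in> carrier K" for Cs
    using ex_coset_rep_ord_eq[OF that] sum_ord_coset_le by auto
  then have "psi G \<le> (\<Sum>Cs\<in>carrier K. group.ord K Cs * cyclic_psi (q ^ a))"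
    unfolding psi_eq_sum_cosets by (rule sum_mono)
  then show ?thesis by (simp add: psi_def sum_distrib_left mult.commute)
qed

lemma coset_subset_centralizer_iff:
  assumes r: "r \<in> carrier G"
  shows "P #> r \<subseteq> centralizer P \<longleftrightarrow> r \<in> centralizer P"
proof
  assume "P #> r \<subseteq> centralizer P"
  then show "r \<in> centralizer P" using rcos_self[OF r subgroup_P] by blast
next
  assume "r \<in> centralizer P"
  then show "P #> r \<subseteq> centralizer P"
    using P_subset_centralizer subgroup.m_closed[OF subgroup_centralizer[OF P_subset]]
    by (auto simp: r_coset_def)
qed

lemma psi_le_central_noncentral:
  "psi G \<le> cyclic_psi (q ^ a) * (\<Sum>Cs\<in>carrier K \<inter> {Cs. Cs \<subseteq> centralizer P}. group.ord K Cs)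
    + (q ^ a * q ^ (a - 1)) * (\<Sum>Cs\<in>carrier K - {Cs. Cs \<subseteq> centralizer P}. group.ord K Cs)"
proof -
  let ?bound = "\<lambda>Cs. if Cs \<subseteq> centralizer P then cyclic_psi (q ^ a) * group.ord K Cs
    else (q ^ a * q ^ (a - 1)) * group.ord K Cs"
  have "(\<Sum>g\<in>Cs. ord g) \<le> ?bound Cs" if Cs: "Cs \<in> carrier K" for Cs
  proof -
    obtain r where r: "r \<in> carrier G" "Cs = P #> r" "ord r = group.ord K Cs"
      using ex_coset_rep_ord_eq[OF Cs] by blast
    show ?thesis
      using sum_ord_coset_le[OF r(1)] sum_ord_coset_le_if_not_centralizer[OF r(1)]
        coset_subset_centralizer_iff[OF r(1)] r by (auto simp: mult.commute)
  qed
  then have "psi G \<le> (\<Sum>Cs\<in>carrier K. ?bound Cs)"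
    unfolding psi_eq_sum_cosets by (rule sum_mono)
  also have "\<dots> = cyclic_psi (q ^ a) * (\<Sum>Cs\<in>carrier K \<inter> {Cs. Cs \<subseteq> centralizer P}. group.ord K Cs)
    + (q ^ a * q ^ (a - 1)) * (\<Sum>Cs\<in>carrier K - {Cs. Cs \<subseteq> centralizer P}. group.ord K Cs)"
    by (simp add: sum.If_cases[OF finite_K] sum_distrib_left Diff_eq)
  finally show ?thesis .
qed

lemma coset_rep_not_centralizer_if_not_cyclic:
  assumes "\<not> cyclic_group G" and r: "r \<in> carrier G" "ord r = order K"
  shows "r \<notin> centralizer P"
proof
  assume "r \<in> centralizer P"
  moreover have "z \<in> P" by (rule generate.incl) simp
  ultimately have "r \<otimes> z = z \<otimes> r" by (simp add: centralizer_def)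
  moreover have "coprime (ord r) (ord z)"
    using coprime_index r(2) ord_gen order_K_eq by (simp add: coprime_commute)
  ultimately have "ord (r \<otimes> z) = order G"
    using ord_mult_if_coprime r(1) gen_carrier r(2) ord_gen order_K by simp
  then show False
    using assms(1) cyclic_group_iff_ex_ord_eq_order[OF finite_carrier] r(1) gen_carrier by blast
qed

text \<open>When \<open>K\<close> is cyclic, the cosets centralizing \<open>P\<close> form a proper subgroup of \<open>K\<close>, as the
  generator of \<open>K\<close> does not centralize \<open>P\<close>.\<close>
lemma sum_ord_central_cosets_le:
  assumes "cyclic_group K" "\<not> cyclic_group G"
  shows "3 * (\<Sum>Cs\<in>carrier K \<inter> {Cs. Cs \<subseteq> centralizer P}. group.ord K Cs) \<le> cyclic_psi (order K)"
proof -
  interpret K: group K by (rule group_K)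
  obtain Y where Y: "Y \<in> carrier K" "K.ord Y = order K"
    using assms(1) K.cyclic_group_iff_ex_ord_eq_order[OF finite_K] by blast
  obtain y where y: "y \<in> carrier G" "Y = P #> y" "ord y = order K"
    using ex_coset_rep_ord_eq[OF Y(1)] Y(2) by auto
  have "y \<notin> centralizer P"
    using coset_rep_not_centralizer_if_not_cyclic[OF assms(2) y(1,3)] .
  obtain d where d: "d > 0" "d dvd ord y" "\<And>i::nat. y [^] i \<in> centralizer P \<longleftrightarrow> d dvd i"
    using pow_mem_subgroup_iff_dvd[OF subgroup_centralizer[OF P_subset] y(1)]
      ord_ge_1[OF finite_carrier y(1)] by auto
  have "d \<noteq> 1" using d(3)[of 1] \<open>y \<notin> centralizer P\<close> y(1) by auto
  have Yd: "Y [^]\<^bsub>K\<^esub> d \<in> carrier K" using Y(1) by simp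
  have ord_Yd: "K.ord (Y [^]\<^bsub>K\<^esub> d) = order K div d"
    using K.ord_pow[OF Y(1)] Y(2) y(3) d(1,2) by simp
  have "carrier K \<inter> {Cs. Cs \<subseteq> centralizer P} \<subseteq> generate K {Y [^]\<^bsub>K\<^esub> d}"
  proof
    fix Cs assume Cs: "Cs \<in> carrier K \<inter> {Cs. Cs \<subseteq> centralizer P}"
    then obtain i :: nat where i: "Cs = Y [^]\<^bsub>K\<^esub> i"
      using K.generate_eq_carrier_if_ord_eq_order[OF finite_K Y]
        K.mem_generate_singleton_iff[OF finite_K Y(1)] by blast
    then have "y [^] i \<in> centralizer P"
      using Cs coset_subset_centralizer_iff y(1,2) coset_pow_K by auto
    then obtain j where "i = d * j" using d(3) by blast
    then have "Cs = (Y [^]\<^bsub>K\<^esub> d) [^]\<^bsub>K\<^esub> j" using i Y(1) by (simp add: K.nat_pow_pow)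
    then show "Cs \<in> generate K {Y [^]\<^bsub>K\<^esub> d}"
      using K.mem_generate_singleton_iff[OF finite_K Yd] by blast
  qed
  then have "(\<Sum>Cs\<in>carrier K \<inter> {Cs. Cs \<subseteq> centralizer P}. K.ord Cs)
      \<le> (\<Sum>Cs\<in>generate K {Y [^]\<^bsub>K\<^esub> d}. K.ord Cs)"
    using K.generate_singleton_subset[OF Yd] finite_K by (intro sum_mono2) (auto dest: finite_subset)
  also have "\<dots> = cyclic_psi (order K div d)"
    using K.sum_ord_generate_singleton[OF finite_K Yd] ord_Yd by simp
  finally have "3 * (\<Sum>Cs\<in>carrier K \<inter> {Cs. Cs \<subseteq> centralizer P}. K.ord Cs) \<le> 3 * cyclic_psi (order K div d)"
    by simp
  also have "\<dots> \<le> cyclic_psi (order K)"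
    using cyclic_psi_proper_divisor[OF _ _ \<open>d \<noteq> 1\<close>] d(2) y(3) ord_ge_1[OF finite_carrier y(1)] by simp
  finally show ?thesis .
qed

lemma cyclic_psi_order: "cyclic_psi (order G) = cyclic_psi (q ^ a) * cyclic_psi (order K)"
  using cyclic_psi_mult[of "q ^ a" "order K"] coprime_index order_K order_K_eq by (simp add: mult.commute)

lemma psi_le_if_quotient_cyclic:
  assumes "cyclic_group K" "\<not> cyclic_group G" "q \<ge> 3"
  shows "11 * psi G \<le> 7 * cyclic_psi (order G)"
proof -
  define A where "A = (\<Sum>Cs\<in>carrier K \<inter> {Cs. Cs \<subseteq> centralizer P}. group.ord K Cs)"
  define B where "B = (\<Sum>Cs\<in>carrier K - {Cs. Cs \<subseteq> centralizer P}. group.ord K Cs)"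
  have "A + B = cyclic_psi (order K)"
    using group.psi_cyclic_group[OF group_K finite_K assms(1)] sum.Int_Diff[OF finite_K]
    unfolding A_def B_def psi_def by metis
  moreover have "3 * A \<le> cyclic_psi (order K)"
    using sum_ord_central_cosets_le[OF assms(1,2)] by (simp add: A_def)
  ultimately have "2 * A \<le> B" by simp
  have "11 * (q ^ a * q ^ (a - 1)) \<le> 5 * cyclic_psi (q ^ a)"
    using cyclic_psi_prime_power_ge[OF prime_q assms(3) a_pos] .
  then have "11 * (q ^ a * q ^ (a - 1)) * B \<le> 5 * (cyclic_psi (q ^ a) * B)"
    using mult_right_mono by fastforce
  moreover have "11 * psi G \<le> 11 * (cyclic_psi (q ^ a) * A) + 11 * (q ^ a * q ^ (a - 1)) * B"
    using psi_le_central_noncentral unfolding A_def[symmetric] B_def[symmetric] by simp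
  moreover have "2 * (cyclic_psi (q ^ a) * A) \<le> cyclic_psi (q ^ a) * B"
    using mult_left_mono[OF \<open>2 * A \<le> B\<close>, of "cyclic_psi (q ^ a)"] by (simp add: mult.left_commute)
  ultimately have "11 * psi G \<le> 7 * (cyclic_psi (q ^ a) * A) + 7 * (cyclic_psi (q ^ a) * B)"
    by linarith
  then have "11 * psi G \<le> 7 * (cyclic_psi (q ^ a) * (A + B))"
    by (simp add: algebra_simps)
  then show ?thesis using \<open>A + B = cyclic_psi (order K)\<close> cyclic_psi_order by simp
qed

lemma psi_le_if_quotient_le:
  assumes "q \<ge> 3" "\<not> cyclic_group G"
    and quotient: "\<not> cyclic_group K \<Longrightarrow> 11 * psi K \<le> 7 * cyclic_psi (order K)"
  shows "11 * psi G \<le> 7 * cyclic_psi (order G)"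
proof (cases "cyclic_group K")
  case True
  then show ?thesis using psi_le_if_quotient_cyclic assms(1,2) by blast
next
  case False
  have "11 * psi G \<le> cyclic_psi (q ^ a) * (11 * psi K)"
    using psi_le_cyclic_psi_mult_psi_quotient by simp
  also have "\<dots> \<le> cyclic_psi (q ^ a) * (7 * cyclic_psi (order K))"
    using quotient[OF False] by (rule mult_left_mono) simp
  finally show ?thesis using cyclic_psi_order by (simp add: algebra_simps)
qed

end

section \<open>The bound for non-cyclic groups\<close>

context group
begin

lemma ex_max_ord:
  assumes "finite (carrier G)"
  obtains x where "x \<in> carrier G" "\<And>g. g \<in> carrier G \<Longrightarrow> ord g \<le> ord x"
proof -
  have "Max (ord ` carrier G) \<in> ord ` carrier G" using assms by (intro Max_in) auto
  then obtain x where "x \<in> carrier G" "ord x = Max (ord ` carrier G)" by auto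
  moreover have "ord g \<le> Max (ord ` carrier G)" if "g \<in> carrier G" for g
    using assms that by simp
  ultimately show ?thesis using that by auto
qed

lemma max_ord_index_if_not_cyclic:
  assumes fin: "finite (carrier G)" and not_cyclic: "\<not> cyclic_group G"
    and x: "x \<in> carrier G" and x_max: "\<And>g. g \<in> carrier G \<Longrightarrow> ord g \<le> ord x"
  obtains m where "order G = ord x * m" "m \<ge> 2" "ord x \<ge> 2"
proof -
  obtain m where m: "order G = ord x * m" using ord_dvd_group_order[OF x] by blast
  have "order G > 0" using fin by (simp add: order_gt_0_iff_finite)
  moreover have "m \<noteq> 1"
    using m not_cyclic x cyclic_group_iff_ex_ord_eq_order[OF fin] by auto
  ultimately have "m \<ge> 2" using m by (cases m) auto
  have "ord x \<noteq> 1"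
  proof
    assume "ord x = 1"
    then have "carrier G = {\<one>}" using x_max ord_ge_1[OF fin] ord_eq_1 by fastforce
    then have "ord \<one> = order G" by (simp add: order_def)
    then show False using not_cyclic cyclic_group_iff_ex_ord_eq_order[OF fin] by blast
  qed
  then have "ord x \<ge> 2" using ord_ge_1[OF fin x] by simp
  then show ?thesis using that m \<open>m \<ge> 2\<close> by blast
qed

text \<open>Here the Sylow \<open>q\<close>-subgroup is cyclic and normal, which reduces the bound to the quotient.\<close>
lemma psi_le_if_index_lt_prime:
  assumes fin: "finite (carrier G)" and not_cyclic: "\<not> cyclic_group G"
    and x: "x \<in> carrier G" and index: "order G = ord x * m"
    and q: "prime q" "q dvd order G" "3 \<le> q" "m < q"
    and quotient_bound: "\<And>H :: 'a set monoid. group H \<Longrightarrow> finite (carrier H) \<Longrightarrow> \<not> cyclic_group H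
      \<Longrightarrow> order H < order G \<Longrightarrow> 11 * psi H \<le> 7 * cyclic_psi (order H)"
  shows "11 * psi G \<le> 7 * cyclic_psi (order G)"
proof -
  have "order G > 0" using fin by (simp add: order_gt_0_iff_finite)
  define a where "a = multiplicity q (order G)"
  obtain r where r: "order G = q ^ a * r" "\<not> q dvd r"
    using multiplicity_decompose'[of "order G" q] \<open>order G > 0\<close> prime_gt_1_nat[OF q(1)]
    unfolding a_def by auto
  have "a \<ge> 1" using r q(2) by (cases a) auto
  have "\<not> q dvd m" using q(4) index \<open>order G > 0\<close> by (auto dest: dvd_imp_le)
  then have "coprime (q ^ a) m" using q(1) by (simp add: prime_imp_coprime)
  moreover have "q ^ a dvd ord x * m" using r index by (metis dvd_triv_left)
  ultimately obtain L where L: "ord x = q ^ a * L" by (metis coprime_dvd_mult_left_iff dvdE)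
  define z where "z = x [^] L"
  have P_eq: "generate G {z} = {g \<in> carrier G. g [^] (q ^ a) = \<one>}"
    unfolding z_def by (rule generate_eq_pow_eq_one_if_index_lt[OF fin x index q(1,4) L])
  have "ord z = q ^ a"
    using ord_pow[OF x, of L] L ord_ge_1[OF fin x] by (simp add: z_def)
  have "generate G {z} \<lhd> G"
    using P_eq x by (intro normal_if_eq_pow_eq_one generate_is_subgroup) (auto simp: z_def)
  moreover have "coprime (q ^ a) (order G div q ^ a)"
    using r q(1) prime_gt_0_nat[OF q(1)] by (simp add: prime_imp_coprime)
  ultimately interpret normal_cyclic_sylow G q a z
    using fin q(1) \<open>a \<ge> 1\<close> x \<open>ord z = q ^ a\<close>
    by (intro normal_cyclic_sylow.intro normal_cyclic_sylow_axioms.intro is_group) (simp_all add: z_def)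
  have "1 < q ^ a" using one_less_power[of q a] q(3) \<open>a \<ge> 1\<close> by simp
  moreover have "order K > 0" using order_K \<open>order G > 0\<close> by (cases "order K") auto
  ultimately have "order K * 1 < order K * q ^ a" by (intro mult_strict_left_mono)
  then have "order K < order G" using order_K by simp
  then show ?thesis
    using psi_le_if_quotient_le[OF q(3) not_cyclic] quotient_bound[OF group_K finite_K] by blast
qed

lemma psi_le_step:
  assumes fin: "finite (carrier G)" and not_cyclic: "\<not> cyclic_group G"
    and quotient_bound: "\<And>H :: 'a set monoid. group H \<Longrightarrow> finite (carrier H) \<Longrightarrow> \<not> cyclic_group H
      \<Longrightarrow> order H < order G \<Longrightarrow> 11 * psi H \<le> 7 * cyclic_psi (order H)"
  shows "11 * psi G \<le> 7 * cyclic_psi (order G)"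
proof -
  obtain x where x: "x \<in> carrier G" and x_max: "\<And>g. g \<in> carrier G \<Longrightarrow> ord g \<le> ord x"
    using ex_max_ord[OF fin] by blast
  obtain m where index: "order G = ord x * m" and "m \<ge> 2" "ord x \<ge> 2"
    using max_ord_index_if_not_cyclic[OF fin not_cyclic x x_max] by blast
  have crude: "psi G \<le> cyclic_psi (ord x) + (order G - ord x) * ord x"
    by (rule psi_le_cyclic_psi_ord_max[OF fin x x_max])
  have coarse: "psi G \<le> order G * ord x"
    by (rule psi_le_order_mult[OF x_max])
  have "order G > 1" using index mult_le_mono[OF \<open>ord x \<ge> 2\<close> \<open>m \<ge> 2\<close>] by simp
  then obtain q where q: "prime q" "q dvd order G"
    and q_max: "\<And>p. p \<in> prime_factors (order G) \<Longrightarrow> p \<le> q"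
    using ex_greatest_prime_factor by blast
  consider "q \<le> 2" | "3 \<le> q" "q \<le> m" | "3 \<le> q" "m < q" by linarith
  then show ?thesis
  proof cases
    case 1
    define e where "e = multiplicity 2 (order G)"
    have "p \<le> 2" if "p \<in> prime_factors (order G)" for p using q_max[OF that] 1 by simp
    then have "order G = 2 ^ e"
      unfolding e_def using \<open>order G > 1\<close> by (intro power_of_two_if_prime_factors_le_two) auto
    moreover have "ord x < order G" "ord x dvd order G" using index \<open>m \<ge> 2\<close> \<open>ord x \<ge> 2\<close> by simp_all
    ultimately have "11 * (cyclic_psi (ord x) + (order G - ord x) * ord x) \<le> 7 * cyclic_psi (order G)"
      using cyclic_psi_two_power_bound[of "ord x" e] \<open>ord x \<ge> 2\<close> by simp
    then show ?thesis by (rule order.trans[OF mult_le_mono2[OF crude]])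
  next
    case 2
    then show ?thesis
      using cyclic_psi_large_index_bound[OF index _ _ _ q_max crude coarse] \<open>ord x \<ge> 2\<close> by simp
  next
    case 3
    then show ?thesis
      using psi_le_if_index_lt_prime[OF fin not_cyclic x index q] quotient_bound by blast
  qed
qed

end

lemma psi_le_nat_monoid:
  fixes H :: "nat monoid"
  assumes "group H" "finite (carrier H)" "\<not> cyclic_group H"
  shows "11 * psi H \<le> 7 * cyclic_psi (order H)"
  using assms
proof (induction "order H" arbitrary: H rule: less_induct)
  case less
  show ?case
  proof (rule group.psi_le_step[OF less.prems])
    fix K :: "nat set monoid"
    assume K: "group K" "finite (carrier K)" "\<not> cyclic_group K" "order K < order H"
    then obtain H' :: "nat monoid" where "group H'" "finite (carrier H')" "order H' = order K"
      "psi H' = psi K" "cyclic_group H' \<longleftrightarrow> cyclic_group K"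
      using ex_nat_monoid_copy by blast
    then show "11 * psi K \<le> 7 * cyclic_psi (order K)"
      using less.hyps[of H'] K by auto
  qed
qed

theorem theorem1:
  fixes G :: "('a, 'b) monoid_scheme"
  assumes "group G" and "finite (carrier G)" and "\<not> cyclic_group G"
  shows "real (psi G) \<le> 7 / 11 * real (psi (integer_mod_group (order G)))"
proof -
  obtain H :: "nat monoid" where "group H" "finite (carrier H)" "order H = order G"
    "psi H = psi G" "cyclic_group H \<longleftrightarrow> cyclic_group G"
    using ex_nat_monoid_copy[OF assms(1,2)] by blast
  then have "11 * psi G \<le> 7 * cyclic_psi (order G)"
    using psi_le_nat_monoid assms(3) by metis
  moreover have "order G \<ge> 1"
    using assms(2) by (simp add: group.is_monoid[OF assms(1)] monoid.order_gt_0_iff_finite Suc_le_eq)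
  ultimately show ?thesis
    using psi_integer_mod_group by simp
qed

end
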